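(* Let $X$ be a path-connected, compact, metrizable topological space, $x_0\in X$, $n\geq 1$. Then the homeomorphism type of $\pi_n(X,x_0)$ with the topology induced by the pseudometric $\rho$ is independent of the choice of metric $d$ inducing the topology of $X$.
   Context: For a metric $d$ on $X$: $\Omega^n(X,x_0)$ is the set of continuous maps $\alpha:[0,1]^n\to X$ with $\alpha(\partial[0,1]^n)=\{x_0\}$, with uniform metric $\mu(\alpha,\beta)=\sup_t d(\alpha(t),\beta(t))$, and $\rho(a,b)=\inf\{\mu(\alpha,\beta)\mid\alpha\in a,\beta\in b\}$ for $a,b\in\pi_n(X,x_0)$, a pseudometric; its topology is generated by open $\rho$-balls. *)

theory Defs
  imports "HOL-Analysis.Analysis"
begin

definition unit_cube :: "(real^'n) set" where
  "unit_cube = cbox 0 1"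

text \<open>Omega^n(X,x0): continuous maps of the cube into X sending the boundary to x0.
  To make maps genuine functions on the cube, we normalise them to be x0 outside the cube.\<close>

definition Omega :: "'a topology \<Rightarrow> 'a \<Rightarrow> ((real^'n) \<Rightarrow> 'a) set" where
  "Omega X x0 = {\<alpha>. continuous_map (top_of_set unit_cube) X \<alpha> \<and>
                     \<alpha> ` frontier unit_cube \<subseteq> {x0} \<and>
                     (\<forall>t. t \<notin> unit_cube \<longrightarrow> \<alpha> t = x0)}"

definition rel_homotopic :: "'a topology \<Rightarrow> 'a \<Rightarrow> ((real^'n) \<Rightarrow> 'a) \<Rightarrow> ((real^'n) \<Rightarrow> 'a) \<Rightarrow> bool" where
  "rel_homotopic X x0 \<alpha> \<beta> \<longleftrightarrow>
     homotopic_with (\<lambda>h. \<forall>t\<in>frontier unit_cube. h t = x0) (top_of_set unit_cube) X \<alpha> \<beta>"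

definition pi_n :: "'a topology \<Rightarrow> 'a \<Rightarrow> ((real^'n) \<Rightarrow> 'a) set set" where
  "pi_n X x0 = Omega X x0 // {(\<alpha>, \<beta>). \<alpha> \<in> Omega X x0 \<and> \<beta> \<in> Omega X x0 \<and> rel_homotopic X x0 \<alpha> \<beta>}"

definition unif_dist :: "('a \<Rightarrow> 'a \<Rightarrow> real) \<Rightarrow> ((real^'n) \<Rightarrow> 'a) \<Rightarrow> ((real^'n) \<Rightarrow> 'a) \<Rightarrow> real" where
  "unif_dist d \<alpha> \<beta> = (SUP t\<in>unit_cube. d (\<alpha> t) (\<beta> t))"

definition rho :: "('a \<Rightarrow> 'a \<Rightarrow> real) \<Rightarrow> ((real^'n) \<Rightarrow> 'a) set \<Rightarrow> ((real^'n) \<Rightarrow> 'a) set \<Rightarrow> real" where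
  "rho d a b = (INF p\<in>a \<times> b. unif_dist d (fst p) (snd p))"

definition pi_n_topology :: "'a topology \<Rightarrow> 'a \<Rightarrow> ('a \<Rightarrow> 'a \<Rightarrow> real) \<Rightarrow> ((real^'n) \<Rightarrow> 'a) set topology" where
  "pi_n_topology X x0 d =
     topology_generated_by {{b \<in> pi_n X x0. rho d a b < r} | a r. a \<in> pi_n X x0 \<and> r > 0}"

end

theory Submission
  imports Defs
begin

(* The pseudometric rho_d satisfies the ultrametric inequality
   rho(a,c) <= max (rho(a,b)) (rho(b,c)): for representatives alpha in a, beta, beta' in b and
   gamma in c, the concatenations alpha.beta^-1.beta' and beta.beta^-1.gamma represent a and c,
   and their uniform distance is at most max (mu(alpha,beta)) (mu(beta',gamma)).  Hence a
   rho-ball of radius r contains the rho-ball of radius r around each of its points.  Two metrics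
   inducing the compact topology of X are uniformly equivalent, so that ball in turn contains a
   small ball for the other metric; thus every rho_d1-ball is open for rho_d2 and vice versa. *)

definition cube_clamp :: "real^'n \<Rightarrow> real^'n" where
  "cube_clamp t = (\<chi> i. max 0 (min 1 (t$i)))"

lemma cube_clamp_in_unit_cube: "cube_clamp t \<in> unit_cube"
  by (auto simp: cube_clamp_def unit_cube_def mem_box_cart)

lemma cube_clamp_id: "t \<in> unit_cube \<Longrightarrow> cube_clamp t = t"
  by (auto simp: cube_clamp_def unit_cube_def mem_box_cart vec_eq_iff)

lemma cube_clamp_notin_box:
  assumes "t \<notin> box 0 1"
  shows "cube_clamp t \<notin> box 0 (1::real^'n)"
proof -
  obtain i where "\<not> (0 < t$i \<and> t$i < 1)"
    using assms by (auto simp: mem_box_cart)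
  then have "\<not> (0 < cube_clamp t $ i \<and> cube_clamp t $ i < 1)"
    by (simp add: cube_clamp_def max_def min_def)
  then show ?thesis by (auto simp: mem_box_cart)
qed

lemma continuous_on_cube_clamp: "continuous_on UNIV cube_clamp"
  unfolding cube_clamp_def by (intro continuous_intros)

lemma continuous_map_cube_clamp: "continuous_map euclidean (top_of_set unit_cube) cube_clamp"
  by (simp add: continuous_map_into_subtopology continuous_on_cube_clamp cube_clamp_in_unit_cube
      image_subset_iff)

lemma frontier_unit_cube: "frontier unit_cube = unit_cube - box 0 1"
  by (simp add: unit_cube_def frontier_cbox)

lemma Omega_outside_box: "\<phi> \<in> Omega X x0 \<Longrightarrow> t \<notin> box 0 1 \<Longrightarrow> \<phi> t = x0"
  unfolding Omega_def frontier_unit_cube by auto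

lemma Omega_cube_clamp:
  assumes "\<phi> \<in> Omega X x0"
  shows "\<phi> (cube_clamp t) = \<phi> t"
proof (cases "t \<in> unit_cube")
  case True
  then show ?thesis by (simp add: cube_clamp_id)
next
  case False
  then have "t \<notin> box 0 1" using box_subset_cbox unfolding unit_cube_def by blast
  then show ?thesis using Omega_outside_box[OF assms] cube_clamp_notin_box by metis
qed

lemma Omega_continuous_map:
  assumes "\<phi> \<in> Omega X x0"
  shows "continuous_map euclidean X \<phi>"
proof -
  have "continuous_map euclidean X (\<phi> \<circ> cube_clamp)"
    using assms by (intro continuous_map_compose[OF continuous_map_cube_clamp]) (auto simp: Omega_def)
  moreover have "\<phi> \<circ> cube_clamp = \<phi>" using Omega_cube_clamp[OF assms] by auto
  ultimately show ?thesis by simp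
qed

lemma Omega_in_topspace: "\<phi> \<in> Omega X x0 \<Longrightarrow> \<phi> t \<in> topspace X"
  using Omega_continuous_map continuous_map_image_subset_topspace by fastforce

lemma OmegaI:
  assumes "continuous_map euclidean X \<phi>" and "\<And>t. t \<notin> box 0 1 \<Longrightarrow> \<phi> t = x0"
  shows "\<phi> \<in> Omega X x0"
  unfolding Omega_def frontier_unit_cube
  using assms box_subset_cbox[of "0::real^'n" 1]
  by (auto intro: continuous_map_from_subtopology simp: unit_cube_def)

lemma continuous_map_compose_continuous_on:
  "continuous_map euclidean X \<phi> \<Longrightarrow> continuous_on UNIV g \<Longrightarrow> continuous_map euclidean X (\<lambda>x. \<phi> (g x))"
  using continuous_map_compose[of euclidean euclidean g X \<phi>] by (simp add: o_def)

lemma continuous_map_Omega_snd: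
  assumes "\<phi> \<in> Omega X x0"
  shows "continuous_map euclidean X (\<lambda>p::real \<times> (real^'n). \<phi> (snd p))"
proof (rule continuous_map_compose_continuous_on[OF Omega_continuous_map[OF assms]])
  show "continuous_on UNIV (\<lambda>p::real \<times> (real^'n). snd p)"
    using continuous_on_snd[OF continuous_on_id[of UNIV]] by simp
qed

lemma rel_homotopic_refl: "\<phi> \<in> Omega X x0 \<Longrightarrow> rel_homotopic X x0 \<phi> \<phi>"
  unfolding rel_homotopic_def Omega_def by (auto intro: homotopic_with_refl[THEN iffD2])

lemma rel_homotopic_sym: "rel_homotopic X x0 f g \<Longrightarrow> rel_homotopic X x0 g f"
  unfolding rel_homotopic_def by (rule homotopic_with_symD)

lemma rel_homotopic_trans:
  "rel_homotopic X x0 f g \<Longrightarrow> rel_homotopic X x0 g h \<Longrightarrow> rel_homotopic X x0 f h"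
  unfolding rel_homotopic_def by (rule homotopic_with_trans)

lemma rel_homotopicI:
  fixes H :: "real \<times> (real^'n) \<Rightarrow> 'a"
  assumes "continuous_map euclidean X H" and "\<And>t. H (0, t) = f t" and "\<And>t. H (1, t) = g t"
    and "\<And>s t. s \<in> {0..1} \<Longrightarrow> t \<notin> box 0 1 \<Longrightarrow> H (s, t) = x0"
  shows "rel_homotopic X x0 f g"
  unfolding rel_homotopic_def homotopic_with_def
proof (intro exI conjI)
  show "continuous_map (prod_topology (top_of_set {0..1}) (top_of_set unit_cube)) X H"
    using assms(1) by (simp add: continuous_map_from_subtopology)
  show "\<forall>s\<in>{0..1}. \<forall>t\<in>frontier unit_cube. H (s, t) = x0"
    using assms(4) unfolding frontier_unit_cube by blast
qed (use assms(2,3) in auto)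

lemma rel_homotopicE:
  fixes f g :: "real^'n \<Rightarrow> 'a"
  assumes "rel_homotopic X x0 f g" and f: "f \<in> Omega X x0" and g: "g \<in> Omega X x0"
  obtains H :: "real \<times> (real^'n) \<Rightarrow> 'a"
  where "continuous_map euclidean X H" and "\<And>t. H (0, t) = f t" and "\<And>t. H (1, t) = g t"
    and "\<And>s t. t \<notin> box 0 1 \<Longrightarrow> H (s, t) = x0"
proof -
  obtain h :: "real \<times> (real^'n) \<Rightarrow> 'a"
    where h: "continuous_map (prod_topology (top_of_set {0..1}) (top_of_set unit_cube)) X h"
      "\<And>t. h (0, t) = f t" "\<And>t. h (1, t) = g t"
      "\<And>s t. s \<in> {0..1} \<Longrightarrow> t \<in> frontier unit_cube \<Longrightarrow> h (s, t) = x0"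
    using assms(1) unfolding rel_homotopic_def homotopic_with_def by blast
  define clamp01 where "clamp01 = (\<lambda>s::real. max 0 (min 1 s))"
  have clamp01: "clamp01 s \<in> {0..1}" for s by (auto simp: clamp01_def)
  have "continuous_map euclidean (prod_topology (top_of_set {0..1}) (top_of_set unit_cube))
      (\<lambda>p. (clamp01 (fst p), cube_clamp (snd p)))"
  proof (intro continuous_map_pairedI continuous_map_into_subtopology)
    show "continuous_map euclidean euclideanreal (\<lambda>p. clamp01 (fst p))"
      unfolding clamp01_def by (auto intro!: continuous_intros)
    show "continuous_map euclidean euclidean (\<lambda>p. cube_clamp (snd p))"
      by (auto intro!: continuous_intros continuous_on_compose2[OF continuous_on_cube_clamp])
  qed (use clamp01 cube_clamp_in_unit_cube in auto)
  then have "continuous_map euclidean X (\<lambda>p. h (clamp01 (fst p), cube_clamp (snd p)))"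
    using continuous_map_compose[OF _ h(1)] by (simp add: o_def)
  moreover have "h (clamp01 s, cube_clamp t) = x0" if "t \<notin> box 0 1" for s t
    by (intro h(4) clamp01)
      (simp add: frontier_unit_cube cube_clamp_in_unit_cube cube_clamp_notin_box[OF that])
  ultimately show ?thesis
    using that h(2,3) Omega_cube_clamp[OF f] Omega_cube_clamp[OF g] by (simp add: clamp01_def)
qed

text \<open>Loops are concatenated along an arbitrary but fixed coordinate.\<close>

definition concat_coord :: 'n where
  "concat_coord = undefined"

definition with_coord :: "real^'n \<Rightarrow> real \<Rightarrow> real^'n" where
  "with_coord t v = (\<chi> i. if i = concat_coord then v else t$i)"

lemma with_coord_with_coord [simp]: "with_coord (with_coord t v) w = with_coord t w"
  by (simp add: with_coord_def vec_eq_iff)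

lemma with_coord_self [simp]: "with_coord t (t$concat_coord) = t"
  by (simp add: with_coord_def vec_eq_iff)

lemma with_coord_nth_concat_coord [simp]: "with_coord t v $ concat_coord = v"
  by (simp add: with_coord_def)

lemma continuous_on_with_coord [continuous_intros]:
  assumes "continuous_on S f" and "continuous_on S g"
  shows "continuous_on S (\<lambda>x. with_coord (f x) (g x))"
  unfolding with_coord_def
proof (intro continuous_on_vec_lambda)
  show "continuous_on S (\<lambda>x. if i = concat_coord then g x else f x $ i)" for i
    using assms by (cases "i = concat_coord") (auto intro: continuous_intros)
qed

definition lateral_outside :: "real^'n \<Rightarrow> bool" where
  "lateral_outside t \<longleftrightarrow> (\<exists>i. i \<noteq> concat_coord \<and> \<not> (0 < t$i \<and> t$i < 1))"

lemma lateral_outside_with_coord [simp]: "lateral_outside (with_coord t v) = lateral_outside t"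
  by (auto simp: lateral_outside_def with_coord_def)

lemma notin_box_iff:
  "t \<notin> box 0 1 \<longleftrightarrow> lateral_outside t \<or> t$concat_coord \<le> 0 \<or> 1 \<le> t$concat_coord"
  unfolding lateral_outside_def mem_box_cart by (metis not_less zero_index one_index)

lemma Omega_outside_box_coord:
  "\<phi> \<in> Omega X x0 \<Longrightarrow> lateral_outside t \<or> t$concat_coord \<le> 0 \<or> 1 \<le> t$concat_coord \<Longrightarrow> \<phi> t = x0"
  using Omega_outside_box notin_box_iff by metis

lemma Omega_with_coord_outside:
  "\<phi> \<in> Omega X x0 \<Longrightarrow> v \<le> 0 \<or> 1 \<le> v \<Longrightarrow> \<phi> (with_coord t v) = x0"
  by (rule Omega_outside_box_coord) auto

text \<open>The middle loop is run backwards, so that \<open>concat3 \<alpha> \<beta> \<beta>\<close> is homotopic to \<open>\<alpha>\<close>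
  and \<open>concat3 \<beta> \<beta> \<gamma>\<close> to \<open>\<gamma>\<close>.\<close>

definition concat3 ::
    "(real^'n \<Rightarrow> 'a) \<Rightarrow> (real^'n \<Rightarrow> 'a) \<Rightarrow> (real^'n \<Rightarrow> 'a) \<Rightarrow> real^'n \<Rightarrow> 'a" where
  "concat3 f g h t =
     (if t$concat_coord \<le> 1/3 then f (with_coord t (3 * t$concat_coord))
      else if t$concat_coord \<le> 2/3 then g (with_coord t (2 - 3 * t$concat_coord))
      else h (with_coord t (3 * t$concat_coord - 2)))"

lemma continuous_map_concat3:
  fixes F G K :: "real \<Rightarrow> real^'n \<Rightarrow> 'a"
  assumes F: "continuous_map euclidean X (\<lambda>p. F (fst p) (snd p))"
    and G: "continuous_map euclidean X (\<lambda>p. G (fst p) (snd p))"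
    and K: "continuous_map euclidean X (\<lambda>p. K (fst p) (snd p))"
    and FG: "\<And>s t. F s (with_coord t 1) = G s (with_coord t 1)"
    and GK: "\<And>s t. G s (with_coord t 0) = K s (with_coord t 0)"
  shows "continuous_map euclidean X (\<lambda>p. concat3 (F (fst p)) (G (fst p)) (K (fst p)) (snd p))"
proof -
  let ?u = "\<lambda>p::real \<times> (real^'n). snd p $ concat_coord"
  have u: "continuous_map euclidean euclideanreal ?u"
    by (simp add: continuous_intros)
  have reparam: "continuous_map euclidean X (\<lambda>p. H (fst p) (with_coord (snd p) (v (?u p))))"
    if "continuous_map euclidean X (\<lambda>p. H (fst p) (snd p))" and "continuous_on UNIV v" for H v
    using continuous_map_compose_continuous_on[OF that(1), of "\<lambda>p. (fst p, with_coord (snd p) (v (?u p)))"]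
    by (simp add: continuous_on_compose2[OF that(2)] continuous_intros)
  have f: "continuous_map euclidean X (\<lambda>p. F (fst p) (with_coord (snd p) (3 * ?u p)))"
    by (rule reparam[OF F]) (intro continuous_intros)
  have g: "continuous_map euclidean X (\<lambda>p. G (fst p) (with_coord (snd p) (2 - 3 * ?u p)))"
    by (rule reparam[OF G]) (intro continuous_intros)
  have k: "continuous_map euclidean X (\<lambda>p. K (fst p) (with_coord (snd p) (3 * ?u p - 2)))"
    by (rule reparam[OF K]) (intro continuous_intros)
  have gk: "continuous_map euclidean X (\<lambda>p. if ?u p \<le> 2/3
      then G (fst p) (with_coord (snd p) (2 - 3 * ?u p))
      else K (fst p) (with_coord (snd p) (3 * ?u p - 2)))"
  proof (rule continuous_map_cases_le[OF u _ continuous_map_from_subtopology[OF g]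
        continuous_map_from_subtopology[OF k]])
    fix p :: "real \<times> (real^'n)"
    assume "?u p = 2/3"
    then have "2 - 3 * ?u p = 0" and "3 * ?u p - 2 = 0" by simp_all
    then show "G (fst p) (with_coord (snd p) (2 - 3 * ?u p)) = K (fst p) (with_coord (snd p) (3 * ?u p - 2))"
      using GK by simp
  qed simp
  have "continuous_map euclidean X (\<lambda>p. if ?u p \<le> 1/3
      then F (fst p) (with_coord (snd p) (3 * ?u p))
      else if ?u p \<le> 2/3 then G (fst p) (with_coord (snd p) (2 - 3 * ?u p))
      else K (fst p) (with_coord (snd p) (3 * ?u p - 2)))"
  proof (rule continuous_map_cases_le[OF u _ continuous_map_from_subtopology[OF f]
        continuous_map_from_subtopology[OF gk]])
    fix p :: "real \<times> (real^'n)"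
    assume "?u p = 1/3"
    then have "3 * ?u p = 1" and "2 - 3 * ?u p = 1" by simp_all
    then show "F (fst p) (with_coord (snd p) (3 * ?u p)) = (if ?u p \<le> 2/3
      then G (fst p) (with_coord (snd p) (2 - 3 * ?u p))
      else K (fst p) (with_coord (snd p) (3 * ?u p - 2)))"
      using FG by simp
  qed simp
  then show ?thesis by (simp add: concat3_def)
qed

lemma concat3_outside_box:
  assumes "\<And>t. lateral_outside t \<or> t$concat_coord \<le> 0 \<Longrightarrow> f t = x0"
    and "\<And>t. lateral_outside t \<Longrightarrow> g t = x0"
    and "\<And>t. lateral_outside t \<or> 1 \<le> t$concat_coord \<Longrightarrow> h t = x0"
    and "t \<notin> box 0 1"
  shows "concat3 f g h t = x0"
  using assms(4) unfolding notin_box_iff concat3_def by (auto intro: assms(1-3))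

lemma concat3_in_Omega:
  fixes f g h :: "real^'n \<Rightarrow> 'a"
  assumes f: "f \<in> Omega X x0" and g: "g \<in> Omega X x0" and h: "h \<in> Omega X x0"
  shows "concat3 f g h \<in> Omega X x0"
proof (rule OmegaI)
  have "continuous_map euclidean X (\<lambda>p::real \<times> (real^'n). concat3 f g h (snd p))"
    using Omega_outside_box_coord[OF f] Omega_outside_box_coord[OF g] Omega_outside_box_coord[OF h]
    by (intro continuous_map_concat3[OF continuous_map_Omega_snd[OF f] continuous_map_Omega_snd[OF g]
          continuous_map_Omega_snd[OF h]]) simp_all
  then have "continuous_map euclidean X (\<lambda>t. (\<lambda>p::real \<times> (real^'n). concat3 f g h (snd p)) (0, t))"
    by (rule continuous_map_compose_continuous_on) (intro continuous_intros)
  then show "continuous_map euclidean X (concat3 f g h)" by simp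
  show "concat3 f g h t = x0" if "t \<notin> box 0 1" for t
    using Omega_outside_box_coord[OF f] Omega_outside_box_coord[OF g] Omega_outside_box_coord[OF h]
    by (intro concat3_outside_box[OF _ _ _ that]) auto
qed

lemma rel_homotopic_concat3:
  fixes F G K :: "real \<Rightarrow> real^'n \<Rightarrow> 'a"
  assumes "continuous_map euclidean X (\<lambda>p. F (fst p) (snd p))"
    and "continuous_map euclidean X (\<lambda>p. G (fst p) (snd p))"
    and "continuous_map euclidean X (\<lambda>p. K (fst p) (snd p))"
    and "\<And>s t. F s (with_coord t 1) = G s (with_coord t 1)"
    and "\<And>s t. G s (with_coord t 0) = K s (with_coord t 0)"
    and "\<And>s t. lateral_outside t \<or> t$concat_coord \<le> 0 \<Longrightarrow> F s t = x0"
    and "\<And>s t. lateral_outside t \<Longrightarrow> G s t = x0"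
    and "\<And>s t. lateral_outside t \<or> 1 \<le> t$concat_coord \<Longrightarrow> K s t = x0"
  shows "rel_homotopic X x0 (concat3 (F 0) (G 0) (K 0)) (concat3 (F 1) (G 1) (K 1))"
  by (rule rel_homotopicI[OF continuous_map_concat3[OF assms(1-5)]])
    (auto intro: concat3_outside_box assms(6-8))

lemma rel_homotopic_concat3_right:
  fixes f g h h' :: "real^'n \<Rightarrow> 'a"
  assumes f: "f \<in> Omega X x0" and g: "g \<in> Omega X x0"
    and h: "h \<in> Omega X x0" and h': "h' \<in> Omega X x0"
    and "rel_homotopic X x0 h' h"
  shows "rel_homotopic X x0 (concat3 f g h') (concat3 f g h)"
proof -
  obtain K :: "real \<times> (real^'n) \<Rightarrow> 'a" where K: "continuous_map euclidean X K"
    and K01: "\<And>t. K (0, t) = h' t" "\<And>t. K (1, t) = h t"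
    and K_outside: "\<And>s t. t \<notin> box 0 1 \<Longrightarrow> K (s, t) = x0"
    using rel_homotopicE[OF assms(5) h' h] by blast
  have "rel_homotopic X x0 (concat3 f g (\<lambda>t. K (0, t))) (concat3 f g (\<lambda>t. K (1, t)))"
    using K_outside unfolding notin_box_iff
    by (intro rel_homotopic_concat3 continuous_map_Omega_snd[OF f] continuous_map_Omega_snd[OF g])
      (auto simp: K Omega_with_coord_outside[OF f] Omega_with_coord_outside[OF g]
        intro: Omega_outside_box_coord[OF f] Omega_outside_box_coord[OF g])
  then show ?thesis by (simp add: K01)
qed

lemma rel_homotopic_concat3_contract_right:
  fixes f g :: "real^'n \<Rightarrow> 'a"
  assumes f: "f \<in> Omega X x0" and g: "g \<in> Omega X x0"
  shows "rel_homotopic X x0 (concat3 f g g) (concat3 f (\<lambda>_. x0) (\<lambda>_. x0))"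
proof -
  txt \<open>\<open>G s\<close> runs through \<open>g\<close> only on the parameter interval \<open>[s, 1]\<close>, so \<open>G 1\<close> is constant.\<close>
  define G where "G s t = g (with_coord t (max (t$concat_coord) s))" for s t
  have "continuous_map euclidean X (\<lambda>p. G (fst p) (snd p))"
    unfolding G_def
    by (rule continuous_map_compose_continuous_on[OF Omega_continuous_map[OF g]]) (intro continuous_intros)
  moreover have "G 0 = g"
  proof
    show "G 0 t = g t" for t
      using Omega_outside_box_coord[OF g, of t] Omega_outside_box_coord[OF g, of "with_coord t 0"]
      by (cases "0 \<le> t$concat_coord") (simp_all add: G_def max_def)
  qed
  moreover have "G 1 = (\<lambda>_. x0)"
    using Omega_outside_box_coord[OF g] by (auto simp: G_def)
  moreover have "rel_homotopic X x0 (concat3 f (G 0) (G 0)) (concat3 f (G 1) (G 1))"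
    by (intro rel_homotopic_concat3 continuous_map_Omega_snd[OF f] calculation)
      (auto simp: G_def le_max_iff_disj min_le_iff_disj
        Omega_with_coord_outside[OF f] Omega_with_coord_outside[OF g]
        intro: Omega_outside_box_coord[OF f] Omega_outside_box_coord[OF g])
  ultimately show ?thesis by simp
qed

lemma rel_homotopic_concat3_contract_left:
  fixes f g :: "real^'n \<Rightarrow> 'a"
  assumes f: "f \<in> Omega X x0" and g: "g \<in> Omega X x0"
  shows "rel_homotopic X x0 (concat3 g g f) (concat3 (\<lambda>_. x0) (\<lambda>_. x0) f)"
proof -
  txt \<open>\<open>G s\<close> runs through \<open>g\<close> only on the parameter interval \<open>[0, 1 - s]\<close>.\<close>
  define G where "G s t = g (with_coord t (min (t$concat_coord) (1 - s)))" for s t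
  have "continuous_map euclidean X (\<lambda>p. G (fst p) (snd p))"
    unfolding G_def
    by (rule continuous_map_compose_continuous_on[OF Omega_continuous_map[OF g]]) (intro continuous_intros)
  moreover have "G 0 = g"
  proof
    show "G 0 t = g t" for t
      using Omega_outside_box_coord[OF g, of t] Omega_outside_box_coord[OF g, of "with_coord t 1"]
      by (cases "t$concat_coord \<le> 1") (simp_all add: G_def min_def)
  qed
  moreover have "G 1 = (\<lambda>_. x0)"
    using Omega_outside_box_coord[OF g] by (auto simp: G_def)
  moreover have "rel_homotopic X x0 (concat3 (G 0) (G 0) f) (concat3 (G 1) (G 1) f)"
    by (intro rel_homotopic_concat3 continuous_map_Omega_snd[OF f] calculation)
      (auto simp: G_def le_max_iff_disj min_le_iff_disj
        Omega_with_coord_outside[OF f] Omega_with_coord_outside[OF g]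
        intro: Omega_outside_box_coord[OF f] Omega_outside_box_coord[OF g])
  ultimately show ?thesis by simp
qed

lemma rel_homotopic_concat3_const_right:
  fixes f :: "real^'n \<Rightarrow> 'a"
  assumes f: "f \<in> Omega X x0"
  shows "rel_homotopic X x0 (concat3 f (\<lambda>_. x0) (\<lambda>_. x0)) f"
proof (rule rel_homotopicI)
  define H where "H p = f (with_coord (snd p) ((3 - 2 * fst p) * snd p $ concat_coord))"
    for p :: "real \<times> (real^'n)"
  show "continuous_map euclidean X H"
    unfolding H_def
    by (rule continuous_map_compose_continuous_on[OF Omega_continuous_map[OF f]]) (intro continuous_intros)
  show "H (0, t) = concat3 f (\<lambda>_. x0) (\<lambda>_. x0) t" for t
    by (simp add: H_def concat3_def Omega_with_coord_outside[OF f])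
  show "H (1, t) = f t" for t
    by (simp add: H_def)
  show "H (s, t) = x0" if s: "s \<in> {0..1}" and "t \<notin> box 0 1" for s t
  proof -
    have "t $ concat_coord \<le> 0 \<Longrightarrow> (3 - 2 * s) * t $ concat_coord \<le> 0"
      using s by (simp add: mult_nonneg_nonpos)
    moreover have "1 \<le> t $ concat_coord \<Longrightarrow> 1 \<le> (3 - 2 * s) * t $ concat_coord"
      using s mult_mono[of 1 "3 - 2 * s" 1 "t $ concat_coord"] by simp
    ultimately show ?thesis
      using \<open>t \<notin> box 0 1\<close> Omega_outside_box_coord[OF f] unfolding notin_box_iff H_def by auto
  qed
qed

lemma rel_homotopic_concat3_const_left:
  fixes f :: "real^'n \<Rightarrow> 'a"
  assumes f: "f \<in> Omega X x0"
  shows "rel_homotopic X x0 (concat3 (\<lambda>_. x0) (\<lambda>_. x0) f) f"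
proof (rule rel_homotopicI)
  define H where
    "H p = f (with_coord (snd p) ((3 - 2 * fst p) * snd p $ concat_coord - 2 * (1 - fst p)))"
    for p :: "real \<times> (real^'n)"
  show "continuous_map euclidean X H"
    unfolding H_def
    by (rule continuous_map_compose_continuous_on[OF Omega_continuous_map[OF f]]) (intro continuous_intros)
  show "H (0, t) = concat3 (\<lambda>_. x0) (\<lambda>_. x0) f t" for t
    by (simp add: H_def concat3_def Omega_with_coord_outside[OF f])
  show "H (1, t) = f t" for t
    by (simp add: H_def)
  show "H (s, t) = x0" if s: "s \<in> {0..1}" and "t \<notin> box 0 1" for s t
  proof -
    have "t $ concat_coord \<le> 0 \<Longrightarrow> (3 - 2 * s) * t $ concat_coord - 2 * (1 - s) \<le> 0"
      using s mult_nonneg_nonpos[of "3 - 2 * s" "t $ concat_coord"] by simp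
    moreover have "1 \<le> t $ concat_coord \<Longrightarrow> 1 \<le> (3 - 2 * s) * t $ concat_coord - 2 * (1 - s)"
    proof -
      assume "1 \<le> t $ concat_coord"
      then have "(3 - 2 * s) * 1 \<le> (3 - 2 * s) * t $ concat_coord"
        using s by (intro mult_left_mono) auto
      then show ?thesis by simp
    qed
    ultimately show ?thesis
      using \<open>t \<notin> box 0 1\<close> Omega_outside_box_coord[OF f] unfolding notin_box_iff H_def by auto
  qed
qed

lemma rel_homotopic_concat3_inverse_right:
  "f \<in> Omega X x0 \<Longrightarrow> g \<in> Omega X x0 \<Longrightarrow> rel_homotopic X x0 (concat3 f g g) f"
  by (metis rel_homotopic_concat3_contract_right rel_homotopic_concat3_const_right rel_homotopic_trans)

lemma rel_homotopic_concat3_inverse_left: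
  "f \<in> Omega X x0 \<Longrightarrow> g \<in> Omega X x0 \<Longrightarrow> rel_homotopic X x0 (concat3 g g f) f"
  by (metis rel_homotopic_concat3_contract_left rel_homotopic_concat3_const_left rel_homotopic_trans)

lemma pi_n_classE:
  assumes "a \<in> pi_n X x0"
  obtains \<alpha> where "\<alpha> \<in> Omega X x0" and "a = {\<beta> \<in> Omega X x0. rel_homotopic X x0 \<alpha> \<beta>}"
proof -
  obtain \<alpha> where \<alpha>: "\<alpha> \<in> Omega X x0"
    and a: "a = {(\<alpha>, \<beta>). \<alpha> \<in> Omega X x0 \<and> \<beta> \<in> Omega X x0 \<and> rel_homotopic X x0 \<alpha> \<beta>} `` {\<alpha>}"
    using assms unfolding pi_n_def by (rule quotientE)
  have "a = {\<beta> \<in> Omega X x0. rel_homotopic X x0 \<alpha> \<beta>}"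
    unfolding a using \<alpha> by (simp add: Image_singleton)
  with \<alpha> show ?thesis by (rule that)
qed

lemma pi_n_class_nonempty:
  assumes "a \<in> pi_n X x0"
  shows "a \<noteq> {}"
proof -
  obtain \<alpha> where "\<alpha> \<in> Omega X x0" and "a = {\<beta> \<in> Omega X x0. rel_homotopic X x0 \<alpha> \<beta>}"
    using assms by (rule pi_n_classE)
  then have "\<alpha> \<in> a" by (simp add: rel_homotopic_refl)
  then show ?thesis by blast
qed

lemma pi_n_class_subset_Omega: "a \<in> pi_n X x0 \<Longrightarrow> a \<subseteq> Omega X x0"
  by (erule pi_n_classE) simp

lemma pi_n_class_closed:
  assumes "a \<in> pi_n X x0" and "\<alpha> \<in> a" and "\<beta> \<in> Omega X x0" and "rel_homotopic X x0 \<beta> \<alpha>"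
  shows "\<beta> \<in> a"
  using assms(1)
proof (rule pi_n_classE)
  fix \<alpha>0 assume "a = {\<beta> \<in> Omega X x0. rel_homotopic X x0 \<alpha>0 \<beta>}"
  with assms(2-4) show ?thesis
    using rel_homotopic_trans[OF _ rel_homotopic_sym[OF assms(4)]] by simp
qed

lemma pi_n_class_rel_homotopic:
  assumes "a \<in> pi_n X x0" and "\<alpha> \<in> a" and "\<beta> \<in> a"
  shows "rel_homotopic X x0 \<alpha> \<beta>"
  using assms(1)
proof (rule pi_n_classE)
  fix \<alpha>0 assume "a = {\<beta> \<in> Omega X x0. rel_homotopic X x0 \<alpha>0 \<beta>}"
  with assms(2,3) have "rel_homotopic X x0 \<alpha>0 \<alpha>" and "rel_homotopic X x0 \<alpha>0 \<beta>" by simp_all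
  then show ?thesis by (rule rel_homotopic_trans[OF rel_homotopic_sym])
qed

lemma unif_dist_le:
  fixes \<alpha> \<beta> :: "real^'n \<Rightarrow> 'a"
  assumes "\<And>t. d (\<alpha> t) (\<beta> t) \<le> c"
  shows "unif_dist d \<alpha> \<beta> \<le> c"
proof -
  have "(0::real^'n) \<in> unit_cube" by (simp add: unit_cube_def mem_box_cart)
  then show ?thesis unfolding unif_dist_def using assms by (intro cSUP_least) auto
qed

locale compact_metrization = Metric_space "topspace X" d
  for X :: "'a topology" and d :: "'a \<Rightarrow> 'a \<Rightarrow> real" +
  assumes mtopology_eq: "mtopology = X"
    and compact_space_X: "compact_space X"
begin

lemma bounded_topspace:
  obtains B where "\<And>x y. x \<in> topspace X \<Longrightarrow> y \<in> topspace X \<Longrightarrow> d x y \<le> B"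
proof -
  have "mbounded (topspace X)"
    using compact_space_X by (intro compactin_imp_mbounded) (simp add: mtopology_eq compact_space_def)
  then show ?thesis using that unfolding mbounded_alt by blast
qed

lemma dist_le_unif_dist:
  fixes \<alpha> \<beta> :: "real^'n \<Rightarrow> 'a"
  assumes \<alpha>: "\<alpha> \<in> Omega X x0" and \<beta>: "\<beta> \<in> Omega X x0"
  shows "d (\<alpha> t) (\<beta> t) \<le> unif_dist d \<alpha> \<beta>"
proof -
  obtain B where B: "\<And>x y. x \<in> topspace X \<Longrightarrow> y \<in> topspace X \<Longrightarrow> d x y \<le> B"
    using bounded_topspace by blast
  have "bdd_above ((\<lambda>t. d (\<alpha> t) (\<beta> t)) ` unit_cube)"
  proof (rule bdd_aboveI2)
    show "d (\<alpha> t) (\<beta> t) \<le> B" for t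
      by (intro B Omega_in_topspace[OF \<alpha>] Omega_in_topspace[OF \<beta>])
  qed
  then have "d (\<alpha> (cube_clamp t)) (\<beta> (cube_clamp t)) \<le> unif_dist d \<alpha> \<beta>"
    unfolding unif_dist_def by (intro cSUP_upper cube_clamp_in_unit_cube)
  then show ?thesis by (simp add: Omega_cube_clamp[OF \<alpha>] Omega_cube_clamp[OF \<beta>])
qed

lemma unif_dist_nonneg:
  fixes \<alpha> \<beta> :: "real^'n \<Rightarrow> 'a"
  assumes "\<alpha> \<in> Omega X x0" and "\<beta> \<in> Omega X x0"
  shows "0 \<le> unif_dist d \<alpha> \<beta>"
  using dist_le_unif_dist[OF assms, of 0] nonneg[of "\<alpha> 0" "\<beta> 0"] by linarith

lemma bdd_below_unif_dist_pi_n: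
  assumes "a \<in> pi_n X x0" and "b \<in> pi_n X x0"
  shows "bdd_below ((\<lambda>p. unif_dist d (fst p) (snd p)) ` (a \<times> b))"
  using pi_n_class_subset_Omega[OF assms(1)] pi_n_class_subset_Omega[OF assms(2)]
  by (intro bdd_belowI2[where m = 0]) (auto intro!: unif_dist_nonneg)

lemma rho_le_unif_dist:
  assumes "a \<in> pi_n X x0" and "b \<in> pi_n X x0" and "\<alpha> \<in> a" and "\<beta> \<in> b"
  shows "rho d a b \<le> unif_dist d \<alpha> \<beta>"
proof -
  have "(\<alpha>, \<beta>) \<in> a \<times> b" using assms(3,4) by simp
  then have "rho d a b \<le> unif_dist d (fst (\<alpha>, \<beta>)) (snd (\<alpha>, \<beta>))"
    unfolding rho_def by (rule cINF_lower[OF bdd_below_unif_dist_pi_n[OF assms(1,2)]])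
  then show ?thesis by simp
qed

lemma rho_lessE:
  assumes "a \<in> pi_n X x0" and "b \<in> pi_n X x0" and "rho d a b < r"
  obtains \<alpha> \<beta> where "\<alpha> \<in> a" and "\<beta> \<in> b" and "unif_dist d \<alpha> \<beta> < r"
proof -
  have "a \<times> b \<noteq> {}"
    using pi_n_class_nonempty[OF assms(1)] pi_n_class_nonempty[OF assms(2)] by simp
  then have "\<exists>p \<in> a \<times> b. unif_dist d (fst p) (snd p) < r"
    using assms(3) cINF_less_iff[OF _ bdd_below_unif_dist_pi_n[OF assms(1,2)]] unfolding rho_def
    by blast
  then show ?thesis using that by auto
qed

lemma rho_self_le_0:
  assumes "a \<in> pi_n X x0"
  shows "rho d a a \<le> 0"
proof -
  obtain \<alpha> where \<alpha>: "\<alpha> \<in> a" using pi_n_class_nonempty[OF assms] by blast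
  then have "\<alpha> \<in> Omega X x0" using pi_n_class_subset_Omega[OF assms] by blast
  have "rho d a a \<le> unif_dist d \<alpha> \<alpha>"
    by (rule rho_le_unif_dist[OF assms assms \<alpha> \<alpha>])
  also have "\<dots> \<le> 0"
    using Omega_in_topspace[OF \<open>\<alpha> \<in> Omega X x0\<close>] by (intro unif_dist_le) simp
  finally show ?thesis .
qed

lemma rho_ultrametric:
  assumes a: "a \<in> pi_n X x0" and b: "b \<in> pi_n X x0" and c: "c \<in> pi_n X x0"
  shows "rho d a c \<le> max (rho d a b) (rho d b c)"
proof (rule dense_ge)
  fix r assume "max (rho d a b) (rho d b c) < r"
  then have "rho d a b < r" and "rho d b c < r" by simp_all
  obtain \<alpha> \<beta> where "\<alpha> \<in> a" "\<beta> \<in> b" and \<alpha>\<beta>: "unif_dist d \<alpha> \<beta> < r"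
    using rho_lessE[OF a b \<open>rho d a b < r\<close>] .
  obtain \<beta>' \<gamma> where "\<beta>' \<in> b" "\<gamma> \<in> c" and \<beta>'\<gamma>: "unif_dist d \<beta>' \<gamma> < r"
    using rho_lessE[OF b c \<open>rho d b c < r\<close>] .
  have \<alpha>_Omega: "\<alpha> \<in> Omega X x0" and \<beta>_Omega: "\<beta> \<in> Omega X x0"
    and \<beta>'_Omega: "\<beta>' \<in> Omega X x0" and \<gamma>_Omega: "\<gamma> \<in> Omega X x0"
    using pi_n_class_subset_Omega[OF a] pi_n_class_subset_Omega[OF b] pi_n_class_subset_Omega[OF c]
      \<open>\<alpha> \<in> a\<close> \<open>\<beta> \<in> b\<close> \<open>\<beta>' \<in> b\<close> \<open>\<gamma> \<in> c\<close> by auto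
  have "rel_homotopic X x0 (concat3 \<alpha> \<beta> \<beta>') (concat3 \<alpha> \<beta> \<beta>)"
    using pi_n_class_rel_homotopic[OF b \<open>\<beta>' \<in> b\<close> \<open>\<beta> \<in> b\<close>]
    by (intro rel_homotopic_concat3_right \<alpha>_Omega \<beta>_Omega \<beta>'_Omega)
  then have "rel_homotopic X x0 (concat3 \<alpha> \<beta> \<beta>') \<alpha>"
    using rel_homotopic_concat3_inverse_right[OF \<alpha>_Omega \<beta>_Omega] by (rule rel_homotopic_trans)
  then have "concat3 \<alpha> \<beta> \<beta>' \<in> a"
    using concat3_in_Omega[OF \<alpha>_Omega \<beta>_Omega \<beta>'_Omega] pi_n_class_closed[OF a \<open>\<alpha> \<in> a\<close>] by blast
  moreover have "concat3 \<beta> \<beta> \<gamma> \<in> c"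
    using pi_n_class_closed[OF c \<open>\<gamma> \<in> c\<close> concat3_in_Omega[OF \<beta>_Omega \<beta>_Omega \<gamma>_Omega]
        rel_homotopic_concat3_inverse_left[OF \<gamma>_Omega \<beta>_Omega]] .
  ultimately have "rho d a c \<le> unif_dist d (concat3 \<alpha> \<beta> \<beta>') (concat3 \<beta> \<beta> \<gamma>)"
    by (rule rho_le_unif_dist[OF a c])
  also have "\<dots> \<le> max (unif_dist d \<alpha> \<beta>) (unif_dist d \<beta>' \<gamma>)"
  proof (rule unif_dist_le)
    txt \<open>On the three thirds of the cube the two concatenations compare \<open>\<alpha>\<close> with \<open>\<beta>\<close>,
      \<open>\<beta>\<close> with \<open>\<beta>\<close>, and \<open>\<beta>'\<close> with \<open>\<gamma>\<close>.\<close>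
    fix t
    have "d (\<beta> s) (\<beta> s) = 0" for s
      using Omega_in_topspace[OF \<beta>_Omega] by simp
    then show "d (concat3 \<alpha> \<beta> \<beta>' t) (concat3 \<beta> \<beta> \<gamma> t) \<le> max (unif_dist d \<alpha> \<beta>) (unif_dist d \<beta>' \<gamma>)"
      using dist_le_unif_dist[OF \<alpha>_Omega \<beta>_Omega] dist_le_unif_dist[OF \<beta>'_Omega \<gamma>_Omega]
        unif_dist_nonneg[OF \<alpha>_Omega \<beta>_Omega]
      unfolding concat3_def by (simp add: le_max_iff_disj)
  qed
  also have "\<dots> < r"
    using \<alpha>\<beta> \<beta>'\<gamma> by simp
  finally show "rho d a c \<le> r" by simp
qed

end

lemma uniformly_equivalent_compact_metrics:
  assumes ms1: "Metric_space M d1" and ms2: "Metric_space M d2"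
    and same_topology: "Metric_space.mtopology M d1 = Metric_space.mtopology M d2"
    and compact: "compact_space (Metric_space.mtopology M d2)" and "\<epsilon> > 0"
  obtains \<delta> where "\<delta> > 0" and "\<And>x y. x \<in> M \<Longrightarrow> y \<in> M \<Longrightarrow> d2 x y < \<delta> \<Longrightarrow> d1 x y < \<epsilon>"
proof -
  have "uniformly_continuous_map (metric (M, d2)) (metric (M, d1)) id"
    using compact same_topology
    by (intro continuous_imp_uniformly_continuous_map)
      (simp add: Metric_space.mtopology_of[OF ms1] Metric_space.mtopology_of[OF ms2])
  then show ?thesis
    using that \<open>\<epsilon> > 0\<close> unfolding uniformly_continuous_map_def
    by (auto simp: Metric_space.mspace_metric[OF ms1] Metric_space.mspace_metric[OF ms2]
        Metric_space.mdist_metric[OF ms1] Metric_space.mdist_metric[OF ms2])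
qed

lemma openin_pi_n_topology_rho_ball:
  assumes d1: "compact_metrization X d1" and d2: "compact_metrization X d2"
    and a: "a \<in> pi_n X x0" and "r > 0"
  shows "openin (pi_n_topology X x0 d2) {b \<in> pi_n X x0. rho d1 a b < (r::real)}"
proof (subst openin_subopen, intro ballI)
  fix b0 assume "b0 \<in> {b \<in> pi_n X x0. rho d1 a b < r}"
  then have b0: "b0 \<in> pi_n X x0" and "rho d1 a b0 < r" by auto
  have "Metric_space.mtopology (topspace X) d1 = Metric_space.mtopology (topspace X) d2"
    using compact_metrization.mtopology_eq[OF d1] compact_metrization.mtopology_eq[OF d2] by simp
  moreover have "compact_space (Metric_space.mtopology (topspace X) d2)"
    using compact_metrization.mtopology_eq[OF d2] compact_metrization.compact_space_X[OF d2] by simp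
  ultimately obtain \<delta> where "\<delta> > 0"
    and \<delta>: "\<And>x y. x \<in> topspace X \<Longrightarrow> y \<in> topspace X \<Longrightarrow> d2 x y < \<delta> \<Longrightarrow> d1 x y < r/2"
    using \<open>r > 0\<close> uniformly_equivalent_compact_metrics[OF compact_metrization.axioms(1)[OF d1]
        compact_metrization.axioms(1)[OF d2], of "r/2"] by auto
  define T where "T = {b \<in> pi_n X x0. rho d2 b0 b < \<delta>}"
  have "openin (pi_n_topology X x0 d2) T"
    unfolding pi_n_topology_def T_def
    by (rule topology_generated_by_Basis) (use b0 \<open>\<delta> > 0\<close> in blast)
  moreover have "b0 \<in> T"
    using compact_metrization.rho_self_le_0[OF d2 b0] b0 \<open>\<delta> > 0\<close> unfolding T_def by simp
  moreover have "T \<subseteq> {b \<in> pi_n X x0. rho d1 a b < r}"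
  proof
    fix b assume "b \<in> T"
    then have b: "b \<in> pi_n X x0" and "rho d2 b0 b < \<delta>" unfolding T_def by auto
    then obtain \<beta>0 \<beta> where "\<beta>0 \<in> b0" "\<beta> \<in> b" and "unif_dist d2 \<beta>0 \<beta> < \<delta>"
      using compact_metrization.rho_lessE[OF d2 b0] by blast
    moreover have \<beta>0: "\<beta>0 \<in> Omega X x0" and \<beta>: "\<beta> \<in> Omega X x0"
      using pi_n_class_subset_Omega[OF b0] pi_n_class_subset_Omega[OF b] \<open>\<beta>0 \<in> b0\<close> \<open>\<beta> \<in> b\<close> by auto
    ultimately have "d2 (\<beta>0 t) (\<beta> t) < \<delta>" for t
      using compact_metrization.dist_le_unif_dist[OF d2 \<beta>0 \<beta>, of t] by linarith
    then have "d1 (\<beta>0 t) (\<beta> t) \<le> r/2" for t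
      using \<delta> Omega_in_topspace[OF \<beta>0] Omega_in_topspace[OF \<beta>] less_imp_le by blast
    then have "unif_dist d1 \<beta>0 \<beta> \<le> r/2"
      by (rule unif_dist_le)
    then have "rho d1 b0 b < r"
      using compact_metrization.rho_le_unif_dist[OF d1 b0 b \<open>\<beta>0 \<in> b0\<close> \<open>\<beta> \<in> b\<close>] \<open>r > 0\<close>
      by linarith
    then have "rho d1 a b < r"
      using compact_metrization.rho_ultrametric[OF d1 a b0 b] \<open>rho d1 a b0 < r\<close> by linarith
    with b show "b \<in> {b \<in> pi_n X x0. rho d1 a b < r}" by blast
  qed
  ultimately show "\<exists>T. openin (pi_n_topology X x0 d2) T \<and> b0 \<in> T \<and> T \<subseteq> {b \<in> pi_n X x0. rho d1 a b < r}"
    by blast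
qed

lemma pi_n_topology_independent_of_metric:
  assumes "compact_metrization X d1" and "compact_metrization X d2"
  shows "pi_n_topology X x0 d1 = pi_n_topology X x0 d2"
proof -
  have "openin (pi_n_topology X x0 d') S"
    if "compact_metrization X d" "compact_metrization X d'"
      and "openin (pi_n_topology X x0 d) S" for d d' S
  proof (rule generate_topology_on_coarsest[OF istopology_openin])
    show "generate_topology_on {{b \<in> pi_n X x0. rho d a b < r} | a r. a \<in> pi_n X x0 \<and> r > 0} S"
      using that(3) unfolding pi_n_topology_def openin_topology_generated_by_iff .
  qed (use openin_pi_n_topology_rho_ball[OF that(1,2)] in blast)
  then show ?thesis
    unfolding topology_eq using assms by blast
qed

theorem theorem4p10:
  fixes X :: "'a topology" and x0 :: 'a
    and d1 d2 :: "'a \<Rightarrow> 'a \<Rightarrow> real"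
  assumes "path_connected_space X" and "compact_space X" and "metrizable_space X"
    and "x0 \<in> topspace X"
    and "Metric_space (topspace X) d1" and "Metric_space.mtopology (topspace X) d1 = X"
    and "Metric_space (topspace X) d2" and "Metric_space.mtopology (topspace X) d2 = X"
  shows "(pi_n_topology X x0 d1 :: ((real^'n) \<Rightarrow> 'a) set topology)
           homeomorphic_space (pi_n_topology X x0 d2 :: ((real^'n) \<Rightarrow> 'a) set topology)"
proof -
  have "compact_metrization X d1" and "compact_metrization X d2"
    using assms by (simp_all add: compact_metrization_def compact_metrization_axioms_def)
  then have "(pi_n_topology X x0 d1 :: ((real^'n) \<Rightarrow> 'a) set topology) = pi_n_topology X x0 d2"
    by (rule pi_n_topology_independent_of_metric)
  then show ?thesis
    by (simp add: homeomorphic_space_refl)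
qed

end
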